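(* Let $X$ be a set strongly star Hurewicz space and $Y$ a compact space such that $X\times Y$ is $T_1$ and $|X\times Y|<\mathfrak b$. Then $X\times Y$ is set strongly star Hurewicz.
   Context: For a family $\mathcal U$ of subsets of $Z$ and $A\subseteq Z$, $st(A,\mathcal U)=\bigcup\{U\in\mathcal U: U\cap A\neq\emptyset\}$. $Z$ is set strongly star Hurewicz if for every nonempty $A\subseteq Z$ and every sequence $(\mathcal U_n:n\in\omega)$ of families of open subsets of $Z$ with $\overline A\subseteq\bigcup\mathcal U_n$ for all $n$, there are finite $F_n\subseteq\overline A$ such that each $x\in A$ lies in $st(F_n,\mathcal U_n)$ for all but finitely many $n$. $\mathfrak b$ is the minimal cardinality of a $\leq^*$-unbounded subset of $\omega^\omega$. *)

theory Defs
  imports "HOL-Analysis.Analysis" "HOL-Library.Equipollence"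
begin

definition star_of :: "'a set \<Rightarrow> 'a set set \<Rightarrow> 'a set" where
  "star_of A \<U> = \<Union>{U \<in> \<U>. U \<inter> A \<noteq> {}}"

definition set_strongly_star_hurewicz :: "'a topology \<Rightarrow> bool" where
  "set_strongly_star_hurewicz Z \<longleftrightarrow>
     (\<forall>A \<U>. A \<noteq> {} \<and> A \<subseteq> topspace Z \<and>
        (\<forall>n::nat. (\<forall>U\<in>\<U> n. openin Z U) \<and> Z closure_of A \<subseteq> \<Union>(\<U> n)) \<longrightarrow>
        (\<exists>F. (\<forall>n. finite (F n) \<and> F n \<subseteq> Z closure_of A) \<and>
             (\<forall>x\<in>A. \<forall>\<^sub>F n in sequentially. x \<in> star_of (F n) (\<U> n))))"

definition le_star_bounded :: "(nat \<Rightarrow> nat) set \<Rightarrow> bool" where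
  "le_star_bounded F \<longleftrightarrow> (\<exists>g. \<forall>f\<in>F. \<forall>\<^sub>F n in sequentially. f n \<le> g n)"

text \<open>|S| < b: every family in nat^nat of cardinality at most |S| is bounded.\<close>
definition card_less_b :: "'a set \<Rightarrow> bool" where
  "card_less_b S \<longleftrightarrow> (\<forall>F::(nat \<Rightarrow> nat) set. F \<lesssim> S \<longrightarrow> le_star_bounded F)"

end

theory Submission
  imports Defs
begin

(* For each n, Zorn's lemma gives a subset P n of A, maximal among those of which no member
   of \<U> n contains two points; maximality gives A \<subseteq> st(P n, \<U> n).  By the tube lemma for the
   compact factor Y, every point of X has a neighbourhood over which P n has only finitely many
   points, so in the T1 space X the projection of P n has no accumulation point.  A closed
   discrete subset of a set strongly star Hurewicz space is countable, hence so is P n.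
   Enumerate every P n: the functions sending a \<in> A to the least index of a point of P n that
   shares a member of \<U> n with a are at most |A| < b many, so a single g eventually dominates
   them all, and the first g n points of P n form the required finite sets. *)

definition cover_discrete :: "'a set set \<Rightarrow> 'a set \<Rightarrow> bool" where
  "cover_discrete \<U> P \<longleftrightarrow> pairwise (\<lambda>p q. \<forall>U\<in>\<U>. \<not> (p \<in> U \<and> q \<in> U)) P"

lemma cover_discrete_finite_Int:
  assumes "cover_discrete \<U> P" and "U \<in> \<U>"
  shows "finite (P \<inter> U)"
proof (cases "P \<inter> U = {}")
  case False
  then obtain p where "p \<in> P \<inter> U" by blast
  with assms have "P \<inter> U \<subseteq> {p}"
    unfolding cover_discrete_def pairwise_def by blast
  then show ?thesis by (rule finite_subset) simp
qed simp

lemma exists_cover_discrete_star_covering: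
  assumes "A \<subseteq> \<Union>\<U>"
  shows "\<exists>P\<subseteq>A. cover_discrete \<U> P \<and> A \<subseteq> star_of P \<U>"
proof -
  define S where "S = {P. P \<subseteq> A \<and> cover_discrete \<U> P}"
  have "\<forall>C\<in>chains S. \<Union>C \<in> S"
    unfolding S_def cover_discrete_def chains_def by (auto intro: pairwise_chain_Union)
  then obtain M where M: "M \<in> S" and max: "\<forall>Q\<in>S. M \<subseteq> Q \<longrightarrow> Q = M"
    using Zorn_Lemma by blast
  have "a \<in> star_of M \<U>" if a: "a \<in> A" for a
  proof (cases "a \<in> M")
    case True
    then show ?thesis using a assms unfolding star_of_def by blast
  next
    case False
    then have "insert a M \<notin> S" using max by blast
    then have "\<not> cover_discrete \<U> (insert a M)" using M a unfolding S_def by blast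
    then obtain q U where "q \<in> M" "U \<in> \<U>" "a \<in> U" "q \<in> U"
      using M unfolding S_def cover_discrete_def pairwise_insert by blast
    then show ?thesis unfolding star_of_def by blast
  qed
  then show ?thesis using M unfolding S_def by blast
qed

lemma set_strongly_star_hurewicz_countable_discrete:
  assumes "set_strongly_star_hurewicz X" and "A \<subseteq> topspace X"
    and "X derived_set_of A = {}"
  shows "countable A"
proof (cases "A = {}")
  case False
  have "\<exists>W. openin X W \<and> z \<in> W \<and> A \<inter> W \<subseteq> {z}" if z: "z \<in> topspace X" for z
  proof -
    have "z \<notin> X derived_set_of A" using assms(3) by simp
    then show ?thesis using z unfolding in_derived_set_of by blast
  qed
  then obtain W where W_open: "\<And>z. z \<in> topspace X \<Longrightarrow> openin X (W z)"
    and W_mem: "\<And>z. z \<in> topspace X \<Longrightarrow> z \<in> W z"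
    and W_trace: "\<And>z. z \<in> topspace X \<Longrightarrow> A \<inter> W z \<subseteq> {z}"
    by metis
  define \<V> where "\<V> = (\<lambda>_::nat. W ` topspace X)"
  have closure: "X closure_of A = A"
    using assms(2,3) by (auto simp: closure_of)
  have "\<forall>n. (\<forall>V\<in>\<V> n. openin X V) \<and> X closure_of A \<subseteq> \<Union>(\<V> n)"
    unfolding \<V>_def closure using W_open W_mem assms(2) by blast
  then have "\<exists>F. (\<forall>n. finite (F n) \<and> F n \<subseteq> X closure_of A) \<and>
               (\<forall>x\<in>A. \<forall>\<^sub>F n in sequentially. x \<in> star_of (F n) (\<V> n))"
    using assms(1) False assms(2) unfolding set_strongly_star_hurewicz_def by blast
  then obtain F where F: "\<And>n. finite (F n)" "\<And>n. F n \<subseteq> A"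
    and star: "\<And>x. x \<in> A \<Longrightarrow> \<forall>\<^sub>F n in sequentially. x \<in> star_of (F n) (\<V> n)"
    unfolding closure by blast
  \<comment> \<open>Each W z meets A at most in z, so a star of F n can reach a point of A only from itself.\<close>
  have "A \<subseteq> (\<Union>n. F n)"
  proof
    fix x assume x: "x \<in> A"
    obtain n where "x \<in> star_of (F n) (\<V> n)"
      using eventually_happens'[OF sequentially_bot star[OF x]] by blast
    then obtain z e where z: "z \<in> topspace X" and "x \<in> W z" "e \<in> F n" "e \<in> W z"
      unfolding star_of_def \<V>_def by blast
    moreover have "e \<in> A" using F(2) \<open>e \<in> F n\<close> by blast
    ultimately have "x = e" using W_trace[OF z] x by blast
    then show "x \<in> (\<Union>n. F n)" using \<open>e \<in> F n\<close> by blast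
  qed
  moreover have "countable (\<Union>n. F n)"
    using F(1) by (intro countable_UN) (auto intro: countable_finite)
  ultimately show ?thesis by (rule countable_subset)
qed simp

lemma t1_space_derived_set_of_locally_finite:
  assumes "t1_space X"
    and "\<And>z. z \<in> topspace X \<Longrightarrow> \<exists>W. openin X W \<and> z \<in> W \<and> finite (S \<inter> W)"
  shows "X derived_set_of S = {}"
proof -
  have "z \<notin> X derived_set_of S" if z_top: "z \<in> topspace X" for z
  proof
    assume z: "z \<in> X derived_set_of S"
    obtain W where W: "openin X W" "z \<in> W" "finite (S \<inter> W)" using assms(2)[OF z_top] by blast
    have "z \<in> W \<inter> X derived_set_of S" using W z by blast
    also have "\<dots> \<subseteq> X derived_set_of (W \<inter> S)"
      using W(1) by (rule openin_Int_derived_set_of_subset)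
    also have "\<dots> = {}"
      using assms(1) W(3) t1_space_derived_set_of_finite by (metis Int_commute)
    finally show False by simp
  qed
  then show ?thesis using derived_set_of_subset_topspace[of X S] by blast
qed

lemma card_less_b_finite_star_selection:
  assumes "card_less_b S" and "A \<lesssim> S"
    and "\<And>n. countable (P n)" and "\<And>n. A \<subseteq> star_of (P n) (\<U> n)"
  shows "\<exists>F. (\<forall>n. finite (F n) \<and> F n \<subseteq> P n) \<and>
             (\<forall>x\<in>A. \<forall>\<^sub>F n in sequentially. x \<in> star_of (F n) (\<U> n))"
proof -
  define e where "e n = from_nat_into (P n)" for n
  \<comment> \<open>The guard e n k \<in> P n is needed because from_nat_into is junk on an empty P n.\<close>
  define hit where "hit a n k \<longleftrightarrow> e n k \<in> P n \<and> (\<exists>U\<in>\<U> n. a \<in> U \<and> e n k \<in> U)" for a n k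
  define idx where "idx a n = (LEAST k. hit a n k)" for a n
  have hit_idx: "hit a n (idx a n)" if "a \<in> A" for a n
  proof -
    obtain p U where "p \<in> P n" "U \<in> \<U> n" "a \<in> U" "p \<in> U"
      using assms(4) \<open>a \<in> A\<close> unfolding star_of_def by blast
    then have "hit a n (to_nat_on (P n) p)"
      unfolding hit_def e_def using assms(3) by auto
    then show ?thesis unfolding idx_def by (rule LeastI)
  qed
  have "idx ` A \<lesssim> S"
    using image_lepoll assms(2) by (rule lepoll_trans)
  then obtain g where g: "\<And>a. a \<in> A \<Longrightarrow> \<forall>\<^sub>F n in sequentially. idx a n \<le> g n"
    using assms(1) unfolding card_less_b_def le_star_bounded_def by blast
  define F where "F n = P n \<inter> e n ` {..g n}" for n
  have "\<forall>\<^sub>F n in sequentially. x \<in> star_of (F n) (\<U> n)" if x: "x \<in> A" for x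
    using g[OF x]
  proof (rule eventually_mono)
    fix n assume "idx x n \<le> g n"
    with hit_idx[OF x] show "x \<in> star_of (F n) (\<U> n)"
      unfolding hit_def F_def star_of_def by blast
  qed
  moreover have "finite (F n) \<and> F n \<subseteq> P n" for n
    unfolding F_def by simp
  ultimately show ?thesis by blast
qed

lemma compact_space_tube_finite_points:
  fixes X :: "'a topology" and Y :: "'b topology"
  assumes "compact_space Y"
    and "\<forall>U\<in>\<U>. openin (prod_topology X Y) U" and "D \<subseteq> \<Union>\<U>"
    and "closedin (prod_topology X Y) D" and "P \<subseteq> D" and "cover_discrete \<U> P"
    and "z \<in> topspace X"
  shows "\<exists>W. openin X W \<and> z \<in> W \<and> finite (P \<inter> W \<times> topspace Y)"
proof -
  let ?Z = "prod_topology X Y"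
  let ?\<V> = "insert (topspace ?Z - D) \<U>"
  have "compactin ?Z ({z} \<times> topspace Y)"
    using assms(1,7) by (simp add: compactin_Times compact_space_def)
  moreover have "\<And>V. V \<in> ?\<V> \<Longrightarrow> openin ?Z V"
    using assms(2,4) by blast
  moreover have "{z} \<times> topspace Y \<subseteq> \<Union>?\<V>"
    using assms(3,7) by auto
  ultimately obtain \<F> where \<F>: "finite \<F>" "\<F> \<subseteq> ?\<V>" "{z} \<times> topspace Y \<subseteq> \<Union>\<F>"
    by (meson compactinD)
  have "openin ?Z (\<Union>\<F>)"
    using \<F>(2) assms(2,4) by blast
  moreover have "compactin Y (topspace Y)"
    using assms(1) by (simp add: compact_space_def)
  ultimately have "\<exists>W V. openin X W \<and> openin Y V \<and> z \<in> W \<and> topspace Y \<subseteq> V \<and> W \<times> V \<subseteq> \<Union>\<F>"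
    using assms(7) \<F>(3) by (rule tube_lemma_right)
  then obtain W V where WV: "openin X W" "z \<in> W" "topspace Y \<subseteq> V" "W \<times> V \<subseteq> \<Union>\<F>"
    by blast
  \<comment> \<open>Over W the points of P \<subseteq> D lie in the finitely many members of \<U> chosen in \<F>.\<close>
  have "P \<inter> W \<times> topspace Y \<subseteq> (\<Union>U\<in>\<F> \<inter> \<U>. P \<inter> U)"
  proof
    fix p assume p: "p \<in> P \<inter> W \<times> topspace Y"
    then obtain U where "U \<in> \<F>" "p \<in> U"
      using WV(3,4) by blast
    moreover have "p \<in> D" using p assms(5) by blast
    ultimately have "U \<in> \<F> \<inter> \<U>" using \<F>(2) by blast
    then show "p \<in> (\<Union>U\<in>\<F> \<inter> \<U>. P \<inter> U)" using p \<open>p \<in> U\<close> by blast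
  qed
  moreover have "finite (\<Union>U\<in>\<F> \<inter> \<U>. P \<inter> U)"
    using \<F>(1) cover_discrete_finite_Int[OF assms(6)] by blast
  ultimately show ?thesis
    using WV(1,2) finite_subset by blast
qed

lemma countable_cover_discrete_in_product:
  fixes X :: "'a topology" and Y :: "'b topology"
  assumes "set_strongly_star_hurewicz X" and "compact_space Y" and "t1_space X"
    and "\<forall>U\<in>\<U>. openin (prod_topology X Y) U" and "D \<subseteq> \<Union>\<U>"
    and "closedin (prod_topology X Y) D" and "P \<subseteq> D" and "cover_discrete \<U> P"
  shows "countable P"
proof -
  obtain W where W: "\<And>z. z \<in> topspace X \<Longrightarrow>
      openin X (W z) \<and> z \<in> W z \<and> finite (P \<inter> W z \<times> topspace Y)"
    using compact_space_tube_finite_points[OF assms(2,4-8)] by metis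
  have P_sub: "P \<subseteq> topspace X \<times> topspace Y"
    using assms(6,7) closedin_subset by fastforce
  have fst_P_W: "fst ` P \<inter> W z \<subseteq> fst ` (P \<inter> W z \<times> topspace Y)" for z
    using P_sub by force
  have "\<exists>V. openin X V \<and> z \<in> V \<and> finite (fst ` P \<inter> V)" if "z \<in> topspace X" for z
    using W[OF that] fst_P_W[of z] by (meson finite_imageI finite_subset)
  then have "X derived_set_of (fst ` P) = {}"
    by (rule t1_space_derived_set_of_locally_finite[OF assms(3)])
  moreover have fst_P: "fst ` P \<subseteq> topspace X"
    using P_sub by auto
  ultimately have "countable (fst ` P)"
    using set_strongly_star_hurewicz_countable_discrete[OF assms(1)] by blast
  then have "countable (\<Union>z\<in>fst ` P. P \<inter> W z \<times> topspace Y)"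
    using W fst_P by (intro countable_UN) (auto intro: countable_finite)
  moreover have "P \<subseteq> (\<Union>z\<in>fst ` P. P \<inter> W z \<times> topspace Y)"
  proof
    fix p assume p: "p \<in> P"
    then have "fst p \<in> topspace X" "snd p \<in> topspace Y"
      using P_sub by auto
    then have "p \<in> P \<inter> W (fst p) \<times> topspace Y"
      using W p by (simp add: mem_Times_iff)
    then show "p \<in> (\<Union>z\<in>fst ` P. P \<inter> W z \<times> topspace Y)"
      using p by blast
  qed
  ultimately show ?thesis by (rule countable_subset[rotated])
qed

lemma countable_star_kernel_in_product:
  fixes X :: "'a topology" and Y :: "'b topology"
  assumes "set_strongly_star_hurewicz X" and "compact_space Y" and "t1_space X"
    and "A \<subseteq> topspace (prod_topology X Y)"
    and "\<forall>U\<in>\<U>. openin (prod_topology X Y) U" and "prod_topology X Y closure_of A \<subseteq> \<Union>\<U>"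
  shows "\<exists>P\<subseteq>A. countable P \<and> A \<subseteq> star_of P \<U>"
proof -
  have A_closure: "A \<subseteq> prod_topology X Y closure_of A"
    using assms(4) by (rule closure_of_subset)
  then obtain P where P: "P \<subseteq> A" "cover_discrete \<U> P" "A \<subseteq> star_of P \<U>"
    using exists_cover_discrete_star_covering assms(6) by (meson subset_trans)
  have "countable P"
    using countable_cover_discrete_in_product[OF assms(1-3,5,6) closedin_closure_of]
      subset_trans[OF P(1) A_closure] P(2) .
  then show ?thesis using P by blast
qed

theorem proposition4p6:
  fixes X :: "'a topology" and Y :: "'b topology"
  assumes "set_strongly_star_hurewicz X"
    and "compact_space Y"
    and "t1_space (prod_topology X Y)"
    and "card_less_b (topspace (prod_topology X Y))"
  shows "set_strongly_star_hurewicz (prod_topology X Y)"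
  unfolding set_strongly_star_hurewicz_def
proof (intro allI impI, elim conjE)
  fix A :: "('a \<times> 'b) set" and \<U> :: "nat \<Rightarrow> ('a \<times> 'b) set set"
  let ?Z = "prod_topology X Y"
  assume "A \<noteq> {}" and A: "A \<subseteq> topspace ?Z"
    and \<U>: "\<forall>n. (\<forall>U\<in>\<U> n. openin ?Z U) \<and> ?Z closure_of A \<subseteq> \<Union>(\<U> n)"
  have "?Z \<noteq> trivial_topology"
    using \<open>A \<noteq> {}\<close> A by auto
  then have "t1_space X"
    using assms(3) t1_space_prod_topology by blast
  then have "\<forall>n. \<exists>P. P \<subseteq> A \<and> countable P \<and> A \<subseteq> star_of P (\<U> n)"
    using \<U> by (intro allI countable_star_kernel_in_product[OF assms(1,2) _ A, simplified]) blast+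
  from choice[OF this] obtain P
    where P: "\<forall>n. P n \<subseteq> A \<and> countable (P n) \<and> A \<subseteq> star_of (P n) (\<U> n)"
    by blast
  then have "\<exists>F. (\<forall>n. finite (F n) \<and> F n \<subseteq> P n) \<and>
                 (\<forall>x\<in>A. \<forall>\<^sub>F n in sequentially. x \<in> star_of (F n) (\<U> n))"
    by (intro card_less_b_finite_star_selection[OF assms(4) subset_imp_lepoll[OF A]]) blast+
  then obtain F where F: "\<forall>n. finite (F n) \<and> F n \<subseteq> P n"
    and star: "\<forall>x\<in>A. \<forall>\<^sub>F n in sequentially. x \<in> star_of (F n) (\<U> n)"
    by blast
  have "\<forall>n. finite (F n) \<and> F n \<subseteq> ?Z closure_of A"
    using F P closure_of_subset[OF A] by blast
  then show "\<exists>F. (\<forall>n. finite (F n) \<and> F n \<subseteq> ?Z closure_of A) \<and>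
               (\<forall>x\<in>A. \<forall>\<^sub>F n in sequentially. x \<in> star_of (F n) (\<U> n))"
    by (intro exI[of _ F] conjI star)
qed

end
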